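(* Let $\vec{\mathcal G}=([n],E)$ be a directed graph with $m=|E|$ edges in which every vertex has at least one outgoing edge and which has a single strongly connected component. Let the weights $(r_{ij})$ be independent absolutely continuous random variables with densities $f_{ij}$ satisfying $f_{ij}(y)\le\phi$ for all $(i,j),y$. For $(i,j)\in E$ define $$Y_{ij}(r)=\inf\{x\in\mathbb R:\ \text{some cycle of minimum mean weight in } \vec{\mathcal G} \text{ with weights } (x,r_{-ij}) \text{ does not contain } (i,j)\}$$ (with values in $[-\infty,+\infty]$). Then for every $\alpha>0$, $$\mathbb P\bigl(\exists (i,j)\in E:\ Y_{ij}\le r_{ij}\le Y_{ij}+\alpha\bigr)\le\alpha m\phi .$$
   Context: The mean weight of a directed cycle is the sum of its edge weights divided by its number of edges. $(x,r_{-ij})$ denotes $r$ with coordinate $ij$ replaced by $x$. *)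

theory Defs
  imports "HOL-Probability.Probability"
begin

text \<open>A directed graph on vertex set [n] = {0..<n} is given by its edge set
  E :: (nat \<times> nat) set. Weights are functions w :: nat \<times> nat \<Rightarrow> real
  (only values on E matter).\<close>

definition is_cycle :: "(nat \<times> nat) set \<Rightarrow> nat list \<Rightarrow> bool" where
  "is_cycle E c \<longleftrightarrow> c \<noteq> [] \<and> distinct c \<and>
     (\<forall>i < length c. (c ! i, c ! (Suc i mod length c)) \<in> E)"

definition cycle_edges :: "nat list \<Rightarrow> (nat \<times> nat) set" where
  "cycle_edges c = {(c ! i, c ! (Suc i mod length c)) | i. i < length c}"

definition mean_weight :: "(nat \<times> nat \<Rightarrow> real) \<Rightarrow> nat list \<Rightarrow> real" where
  "mean_weight w c =
     (\<Sum>i<length c. w (c ! i, c ! (Suc i mod length c))) / real (length c)"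

definition is_min_mean_cycle ::
  "(nat \<times> nat) set \<Rightarrow> (nat \<times> nat \<Rightarrow> real) \<Rightarrow> nat list \<Rightarrow> bool" where
  "is_min_mean_cycle E w c \<longleftrightarrow> is_cycle E c \<and>
     (\<forall>c'. is_cycle E c' \<longrightarrow> mean_weight w c \<le> mean_weight w c')"

text \<open>Y_e(r) = inf { x : some minimum mean cycle for weights (x, r_{-e}) avoids e },
  in the extended reals (inf of the empty set is +\<infinity>).\<close>
definition Y_thr :: "(nat \<times> nat) set \<Rightarrow> nat \<times> nat \<Rightarrow> (nat \<times> nat \<Rightarrow> real) \<Rightarrow> ereal" where
  "Y_thr E e r = Inf {ereal x | x. \<exists>c. is_min_mean_cycle E (r(e := x)) c \<and> e \<notin> cycle_edges c}"

end

theory Submission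
  imports Defs
begin

text \<open>For a single edge e, Y_e is a measurable function of the weights off e alone, while
  r_e is independent of those weights and has density at most \<phi>; conditioning on the
  other weights, the event Y_e \<le> r_e \<le> Y_e + \<alpha> asks r_e to fall into a fixed interval of
  length \<alpha>, which has probability at most \<alpha>\<phi>. A union bound over the m edges concludes.\<close>

lemma mean_weight_cong:
  assumes "is_cycle E c" and "\<And>d. d \<in> E \<Longrightarrow> w d = w' d"
  shows "mean_weight w c = mean_weight w' c"
  using assms unfolding mean_weight_def is_cycle_def
  by (intro arg_cong[where f="\<lambda>s. s / _"] sum.cong) auto

lemma mean_weight_fun_upd_mono:
  "x \<le> x' \<Longrightarrow> mean_weight (w(e := x)) c \<le> mean_weight (w(e := x')) c"
  unfolding mean_weight_def by (intro divide_right_mono sum_mono) auto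

lemma mean_weight_fun_upd_notin:
  "e \<notin> cycle_edges c \<Longrightarrow> mean_weight (w(e := x)) c = mean_weight (w(e := x')) c"
  unfolding mean_weight_def cycle_edges_def
  by (intro arg_cong[where f="\<lambda>s. s / _"] sum.cong) auto

definition min_mean_cycle_avoids ::
  "(nat \<times> nat) set \<Rightarrow> nat \<times> nat \<Rightarrow> (nat \<times> nat \<Rightarrow> real) \<Rightarrow> real \<Rightarrow> bool" where
  "min_mean_cycle_avoids E e w x \<longleftrightarrow>
     (\<exists>c. is_min_mean_cycle E (w(e := x)) c \<and> e \<notin> cycle_edges c)"

lemma Y_thr_eq_Inf: "Y_thr E e w = Inf {ereal x | x. min_mean_cycle_avoids E e w x}"
  unfolding Y_thr_def min_mean_cycle_avoids_def by simp

lemma min_mean_cycle_avoids_cong: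
  assumes "\<And>d. d \<in> E - {e} \<Longrightarrow> w d = w' d"
  shows "min_mean_cycle_avoids E e w x = min_mean_cycle_avoids E e w' x"
proof -
  have "mean_weight (w(e := x)) c = mean_weight (w'(e := x)) c" if "is_cycle E c" for c
    using that assms by (intro mean_weight_cong) auto
  then show ?thesis
    unfolding min_mean_cycle_avoids_def is_min_mean_cycle_def by metis
qed

lemma Y_thr_cong: "(\<And>d. d \<in> E - {e} \<Longrightarrow> w d = w' d) \<Longrightarrow> Y_thr E e w = Y_thr E e w'"
  unfolding Y_thr_eq_Inf using min_mean_cycle_avoids_cong by metis

text \<open>Raising the weight of e keeps every cycle avoiding e at its mean weight and makes
  every other cycle heavier.\<close>
lemma min_mean_cycle_avoids_mono:
  "min_mean_cycle_avoids E e w x \<Longrightarrow> x \<le> x' \<Longrightarrow> min_mean_cycle_avoids E e w x'"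
  unfolding min_mean_cycle_avoids_def is_min_mean_cycle_def
  by (metis mean_weight_fun_upd_notin mean_weight_fun_upd_mono order_trans)

lemma Inf_ereal_less_iff_rat:
  assumes up: "\<And>x x'. P x \<Longrightarrow> x \<le> x' \<Longrightarrow> P x'"
  shows "Inf {ereal x | x. P x} < a \<longleftrightarrow> (\<exists>q::rat. ereal (of_rat q) < a \<and> P (of_rat q))"
proof
  assume "Inf {ereal x | x. P x} < a"
  then obtain x where x: "P x" "ereal x < a"
    by (auto simp: Inf_less_iff)
  then obtain t where t: "x < t" "ereal t < a"
    using ereal_dense2[OF x(2)] by auto
  obtain q where q: "x < of_rat q" "of_rat q < t"
    using of_rat_dense[OF t(1)] by blast
  have "ereal (of_rat q) < a"
    using q(2) t(2) by (simp add: order.strict_trans[of _ "ereal t"])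
  moreover have "P (of_rat q)"
    using up[OF x(1)] q(1) by simp
  ultimately show "\<exists>q::rat. ereal (of_rat q) < a \<and> P (of_rat q)" by blast
next
  assume "\<exists>q::rat. ereal (of_rat q) < a \<and> P (of_rat q)"
  then obtain q :: rat where "ereal (of_rat q) < a" "P (of_rat q)" by blast
  then show "Inf {ereal x | x. P x} < a"
    by (blast intro: Inf_lower le_less_trans)
qed

lemma Y_thr_less_iff_rat:
  "Y_thr E e w < a \<longleftrightarrow> (\<exists>q::rat. ereal (of_rat q) < a \<and> min_mean_cycle_avoids E e w (of_rat q))"
  unfolding Y_thr_eq_Inf using min_mean_cycle_avoids_mono by (rule Inf_ereal_less_iff_rat)

lemma measurable_component_borel:
  fixes d :: 'i
  shows "(\<lambda>h. h d :: 'a::topological_space) \<in> borel_measurable (PiM I (\<lambda>_. borel))"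
proof (cases "d \<in> I")
  case True
  then show ?thesis by (rule measurable_component_singleton)
next
  case False
  then have "h d = undefined" if "h \<in> space (PiM I (\<lambda>_. borel))" for h :: "'i \<Rightarrow> 'a"
    using PiE_arb that unfolding space_PiM by metis
  then show ?thesis
    by (subst measurable_cong[where g="\<lambda>_. undefined"]) auto
qed

lemma mean_weight_fun_upd_measurable [measurable]:
  "(\<lambda>h. mean_weight (h(e := x)) c) \<in> borel_measurable (PiM I (\<lambda>_. borel))"
proof -
  have "(\<lambda>h. (h(e := x)) d) \<in> borel_measurable (PiM I (\<lambda>_. borel))" for d
    by (cases "d = e") (simp_all add: measurable_component_borel)
  then show ?thesis
    unfolding mean_weight_def by (intro borel_measurable_divide borel_measurable_sum) auto
qed

lemma mean_weight_fun_upd_le_measurable [measurable]: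
  "Measurable.pred (PiM I (\<lambda>_. borel))
     (\<lambda>h. mean_weight (h(e := x)) c \<le> mean_weight (h(e := x)) c')"
  unfolding pred_def by (intro borel_measurable_le mean_weight_fun_upd_measurable)

lemma min_mean_cycle_avoids_measurable [measurable]:
  "Measurable.pred (PiM I (\<lambda>_. borel)) (\<lambda>h. min_mean_cycle_avoids E e h x)"
  unfolding min_mean_cycle_avoids_def is_min_mean_cycle_def by measurable

lemma Y_thr_measurable:
  "(\<lambda>h. Y_thr E e h) \<in> borel_measurable (PiM I (\<lambda>_. borel))"
  unfolding borel_measurable_ereal_iff_Iio
proof
  fix a :: ereal
  have "Y_thr E e -` {..<a} \<inter> space (PiM I (\<lambda>_. borel)) =
      {h \<in> space (PiM I (\<lambda>_. borel)).
        \<exists>q::rat. ereal (of_rat q) < a \<and> min_mean_cycle_avoids E e h (of_rat q)}"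
    by (auto simp: Y_thr_less_iff_rat)
  also have "\<dots> \<in> sets (PiM I (\<lambda>_. borel))"
    by measurable
  finally show "Y_thr E e -` {..<a} \<inter> space (PiM I (\<lambda>_. borel)) \<in> sets (PiM I (\<lambda>_. borel))" .
qed

lemma emeasure_density_le_bound:
  assumes g: "g \<in> borel_measurable lborel" and bound: "\<And>y. g y \<le> ennreal \<phi>"
    and A: "A \<in> sets borel"
  shows "emeasure (density lborel g) A \<le> ennreal \<phi> * emeasure lborel A"
proof -
  have "emeasure (density lborel g) A = (\<integral>\<^sup>+ z. g z * indicator A z \<partial>lborel)"
    using g A by (intro emeasure_density) auto
  also have "\<dots> \<le> (\<integral>\<^sup>+ z. ennreal \<phi> * indicator A z \<partial>lborel)"
    using bound by (intro nn_integral_mono mult_right_mono) auto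
  also have "\<dots> = ennreal \<phi> * emeasure lborel A"
    using A by (intro nn_integral_cmult_indicator) auto
  finally show ?thesis .
qed

lemma emeasure_lborel_ereal_window_le:
  assumes "0 \<le> \<alpha>"
  shows "emeasure lborel {z. y \<le> ereal z \<and> ereal z \<le> y + ereal \<alpha>} \<le> ennreal \<alpha>"
proof (cases y)
  case (real t)
  then have "{z. y \<le> ereal z \<and> ereal z \<le> y + ereal \<alpha>} = {t..t + \<alpha>}" by auto
  then show ?thesis using assms by simp
qed simp_all

lemma (in prob_space) density_bound_nonneg:
  assumes "distributed M lborel Z g" and "\<And>y. g y \<le> ennreal \<phi>"
  shows "0 \<le> \<phi>"
proof (rule ccontr)
  assume neg: "\<not> 0 \<le> \<phi>"
  have "1 = emeasure (distr M lborel Z) UNIV"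
    using prob_space_distr[OF distributed_measurable[OF assms(1)]] by (simp add: prob_space.emeasure_space_1[symmetric])
  also have "\<dots> \<le> ennreal \<phi> * emeasure (lborel :: real measure) UNIV"
    using emeasure_density_le_bound[OF distributed_borel_measurable[OF assms(1)] assms(2), of UNIV]
    by (simp add: distributed_distr_eq_density[OF assms(1)])
  also have "\<dots> = 0" using neg by (simp add: ennreal_eq_0_iff)
  finally show False by simp
qed

text \<open>Fubini over the joint law of the independent pair (X, Y): for each fixed value of X
  the window is a fixed interval of length \<alpha> for p \<circ> Y. The detour through Y is forced
  because independence in the library relates random variables with a common value type.\<close>
lemma (in prob_space) emeasure_indep_window_le:
  assumes indep: "indep_var N X N' Y" and p: "p \<in> borel_measurable N'"
    and dist: "distributed M lborel (\<lambda>\<omega>. p (Y \<omega>)) g" and bound: "\<And>y. g y \<le> ennreal \<phi>"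
    and G: "G \<in> borel_measurable N" and \<alpha>: "0 \<le> \<alpha>"
  shows "emeasure M {\<omega> \<in> space M. G (X \<omega>) \<le> ereal (p (Y \<omega>)) \<and> ereal (p (Y \<omega>)) \<le> G (X \<omega>) + ereal \<alpha>}
    \<le> ennreal \<phi> * ennreal \<alpha>"
proof -
  have rv: "random_variable N X" "random_variable N' Y"
    and joint: "distr M N X \<Otimes>\<^sub>M distr M N' Y = distr M (N \<Otimes>\<^sub>M N') (\<lambda>\<omega>. (X \<omega>, Y \<omega>))"
    using indep unfolding indep_var_distribution_eq by auto
  interpret X: prob_space "distr M N X" using rv(1) by (rule prob_space_distr)
  interpret Y: prob_space "distr M N' Y" using rv(2) by (rule prob_space_distr)
  define window where "window y = {z. y \<le> ereal z \<and> ereal z \<le> y + ereal \<alpha>}" for y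
  define A where "A = {q \<in> space (N \<Otimes>\<^sub>M N'). p (snd q) \<in> window (G (fst q))}"
  have A: "A \<in> sets (N \<Otimes>\<^sub>M N')"
    unfolding A_def window_def using G p by measurable
  have "{\<omega> \<in> space M. G (X \<omega>) \<le> ereal (p (Y \<omega>)) \<and> ereal (p (Y \<omega>)) \<le> G (X \<omega>) + ereal \<alpha>}
      = (\<lambda>\<omega>. (X \<omega>, Y \<omega>)) -` A \<inter> space M"
    using measurable_space[OF rv(1)] measurable_space[OF rv(2)]
    by (auto simp: A_def window_def space_pair_measure)
  also have "emeasure M \<dots> = emeasure (distr M (N \<Otimes>\<^sub>M N') (\<lambda>\<omega>. (X \<omega>, Y \<omega>))) A"
    using rv A by (intro emeasure_distr[symmetric]) measurable
  also have "\<dots> = (\<integral>\<^sup>+ x. emeasure (distr M N' Y) (Pair x -` A) \<partial>distr M N X)"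
    unfolding joint[symmetric] using A
    by (intro Y.emeasure_pair_measure_alt) (metis sets_distr sets_pair_measure_cong)
  also have "\<dots> \<le> (\<integral>\<^sup>+ x. ennreal \<phi> * ennreal \<alpha> \<partial>distr M N X)"
  proof (intro nn_integral_mono)
    fix x assume "x \<in> space (distr M N X)"
    then have "Pair x -` A = p -` window (G x) \<inter> space (distr M N' Y)"
      by (auto simp: A_def space_pair_measure)
    moreover have W: "window (G x) \<in> sets borel"
      unfolding window_def by measurable
    ultimately have "emeasure (distr M N' Y) (Pair x -` A)
        = emeasure (distr (distr M N' Y) borel p) (window (G x))"
      using p by (simp add: emeasure_distr)
    also have "distr (distr M N' Y) borel p = distr M borel (\<lambda>\<omega>. p (Y \<omega>))"
      using p rv(2) by (simp add: distr_distr comp_def)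
    also have "distr M borel (\<lambda>\<omega>. p (Y \<omega>)) = density lborel g"
      using distributed_distr_eq_density[OF dist] by (metis distr_cong sets_lborel)
    also have "emeasure \<dots> (window (G x)) \<le> ennreal \<phi> * emeasure lborel (window (G x))"
      using distributed_borel_measurable[OF dist] bound W by (rule emeasure_density_le_bound)
    also have "\<dots> \<le> ennreal \<phi> * ennreal \<alpha>"
      unfolding window_def using emeasure_lborel_ereal_window_le[OF \<alpha>] by (rule mult_left_mono) simp
    finally show "emeasure (distr M N' Y) (Pair x -` A) \<le> ennreal \<phi> * ennreal \<alpha>" .
  qed
  also have "\<dots> = ennreal \<phi> * ennreal \<alpha>"
    using X.emeasure_space_1 by simp
  finally show ?thesis .
qed

lemma Y_thr_measurable_comp:
  assumes "\<And>d. d \<in> E - {e} \<Longrightarrow> r d \<in> borel_measurable M"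
  shows "(\<lambda>\<omega>. Y_thr E e (\<lambda>d. r d \<omega>)) \<in> borel_measurable M"
proof -
  have "Y_thr E e (\<lambda>d. r d \<omega>) = Y_thr E e (restrict (\<lambda>d. r d \<omega>) (E - {e}))" for \<omega>
    by (rule Y_thr_cong) simp
  moreover have "(\<lambda>\<omega>. Y_thr E e (restrict (\<lambda>d. r d \<omega>) (E - {e}))) \<in> borel_measurable M"
    using measurable_compose[OF measurable_restrict[OF assms] Y_thr_measurable] .
  ultimately show ?thesis by simp
qed

lemma Y_thr_window_measurable:
  assumes r: "\<And>d. d \<in> E \<Longrightarrow> r d \<in> borel_measurable M" and e: "e \<in> E"
  shows "{\<omega> \<in> space M. Y_thr E e (\<lambda>d. r d \<omega>) \<le> ereal (r e \<omega>) \<and>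
      ereal (r e \<omega>) \<le> Y_thr E e (\<lambda>d. r d \<omega>) + ereal \<alpha>} \<in> sets M"
proof -
  note r[OF e, measurable]
  have [measurable]: "(\<lambda>\<omega>. Y_thr E e (\<lambda>d. r d \<omega>)) \<in> borel_measurable M"
    using r by (intro Y_thr_measurable_comp) auto
  show ?thesis by measurable
qed

lemma (in prob_space) prob_Y_thr_window_le:
  assumes indep: "indep_vars (\<lambda>_. borel) r E" and e: "e \<in> E"
    and dist: "distributed M lborel (r e) g" and bound: "\<And>y. g y \<le> ennreal \<phi>"
    and \<alpha>: "0 \<le> \<alpha>"
  shows "prob {\<omega> \<in> space M. Y_thr E e (\<lambda>d. r d \<omega>) \<le> ereal (r e \<omega>) \<and>
      ereal (r e \<omega>) \<le> Y_thr E e (\<lambda>d. r d \<omega>) + ereal \<alpha>} \<le> \<alpha> * \<phi>"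
proof -
  let ?X = "\<lambda>\<omega>. restrict (\<lambda>d. r d \<omega>) (E - {e})"
  have indep_e: "indep_var (PiM (E - {e}) (\<lambda>_. borel)) ?X (PiM {e} (\<lambda>_. borel)) (\<lambda>\<omega>. restrict (\<lambda>d. r d \<omega>) {e})"
    using e by (intro indep_var_restrict[OF indep]) auto
  have Y: "Y_thr E e (\<lambda>d. r d \<omega>) = Y_thr E e (?X \<omega>)" for \<omega>
    by (rule Y_thr_cong) simp
  have "emeasure M {\<omega> \<in> space M. Y_thr E e (\<lambda>d. r d \<omega>) \<le> ereal (r e \<omega>) \<and>
      ereal (r e \<omega>) \<le> Y_thr E e (\<lambda>d. r d \<omega>) + ereal \<alpha>} \<le> ennreal \<phi> * ennreal \<alpha>"
    using emeasure_indep_window_le[OF indep_e _ _ bound Y_thr_measurable \<alpha>, of "\<lambda>f. f e"] dist e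
    by (simp add: Y)
  also have "\<dots> = ennreal (\<alpha> * \<phi>)"
    using density_bound_nonneg[OF dist bound] \<alpha> by (simp add: ennreal_mult' mult.commute)
  finally show ?thesis
    using density_bound_nonneg[OF dist bound] \<alpha> by (simp add: emeasure_eq_measure ennreal_le_iff)
qed

theorem mainTheorem5:
  fixes n :: nat and E :: "(nat \<times> nat) set"
    and M :: "'a measure" and r :: "nat \<times> nat \<Rightarrow> 'a \<Rightarrow> real"
    and f :: "nat \<times> nat \<Rightarrow> real \<Rightarrow> ennreal" and \<phi> :: real and \<alpha> :: real
  assumes E_sub: "E \<subseteq> {..<n} \<times> {..<n}"
    and out_edge: "\<forall>i<n. \<exists>j. (i, j) \<in> E"
    and strongly_conn: "\<forall>i<n. \<forall>j<n. (i, j) \<in> E\<^sup>*"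
    and M: "prob_space M"
    and indep: "prob_space.indep_vars M (\<lambda>_. borel) r E"
    and dens: "\<forall>e\<in>E. distributed M lborel (r e) (f e)"
    and dens_bound: "\<forall>e\<in>E. \<forall>y. f e y \<le> ennreal \<phi>"
    and alpha_pos: "\<alpha> > 0"
  shows "measure M {\<omega> \<in> space M. \<exists>e\<in>E.
            Y_thr E e (\<lambda>e'. r e' \<omega>) \<le> ereal (r e \<omega>) \<and>
            ereal (r e \<omega>) \<le> Y_thr E e (\<lambda>e'. r e' \<omega>) + ereal \<alpha>}
         \<le> \<alpha> * real (card E) * \<phi>"
proof -
  interpret prob_space M by (fact M)
  define S where "S e = {\<omega> \<in> space M. Y_thr E e (\<lambda>e'. r e' \<omega>) \<le> ereal (r e \<omega>) \<and>
      ereal (r e \<omega>) \<le> Y_thr E e (\<lambda>e'. r e' \<omega>) + ereal \<alpha>}" for e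
  have "finite E"
    using E_sub by (rule finite_subset) auto
  have "r e \<in> borel_measurable M" if "e \<in> E" for e
    using indep that unfolding indep_vars_def by simp
  then have S_events: "S e \<in> events" if "e \<in> E" for e
    unfolding S_def using that by (rule Y_thr_window_measurable)
  have "{\<omega> \<in> space M. \<exists>e\<in>E. Y_thr E e (\<lambda>e'. r e' \<omega>) \<le> ereal (r e \<omega>) \<and>
      ereal (r e \<omega>) \<le> Y_thr E e (\<lambda>e'. r e' \<omega>) + ereal \<alpha>} = (\<Union>e\<in>E. S e)"
    unfolding S_def by auto
  also have "prob \<dots> \<le> (\<Sum>e\<in>E. prob (S e))"
    using \<open>finite E\<close> S_events by (rule measure_UNION_le)
  also have "\<dots> \<le> (\<Sum>e\<in>E. \<alpha> * \<phi>)"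
    unfolding S_def using indep dens dens_bound alpha_pos
    by (intro sum_mono prob_Y_thr_window_le) auto
  finally show ?thesis
    by (simp add: mult_ac)
qed

end
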